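(* Let $\mu,\sigma>0$, $T>0$, $K\in\mathbb{N}$ and $\Gamma>0$ satisfy $\mu\sqrt{kT/K}/\sigma\le\Gamma$ for all $k\in\{1,\dots,K\}$. Let \[\mathcal{U}_1=\Big\{r\in\mathbb{R}^K:\Big|\tfrac{\sum_{\ell=1}^k\log(1+r_\ell)-\mu kT/K}{\sigma\sqrt{kT/K}}\Big|\le\Gamma,\ \forall k\in\{1,\dots,K\}\Big\},\] \[\mathcal{W}=\Big\{r\in\mathbb{R}^K:\max_{k'\in\{k+1,\dots,K\}}\Big|\tfrac{\sum_{\ell=1}^k\log(1+r_\ell)-\mu k'T/K}{\sigma\sqrt{k'T/K}}\Big|-\Gamma\le0,\ \forall k\in\{1,\dots,K\}\Big\},\] and $\mathcal{U}'_1=\mathcal{U}_1\cap\mathcal{W}$. Then the worst-case risk measure $\rho$ using the uncertainty set $\mathcal{U}'_1$ satisfies both the bounded market risk assumption and the bounded conditional market risk assumption.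
   Context: Returns $r=(r_1,\dots,r_K)$ of a risky asset on $\Omega=\mathbb{R}^K$ (Borel $\sigma$-algebra, natural filtration $\mathcal{F}_k=\sigma(r_1,\dots,r_k)$); wealth from investing amounts $\zeta_k$ ($\mathcal{F}_k$-measurable) in the risky asset is $X_k=p_0+\sum_{k'=0}^{k-1}\zeta_{k'}r_{k'+1}$, zero interest rate. For an uncertainty set $\mathcal{U}\subseteq\mathbb{R}^K$, the worst-case risk measure is $\rho(X)=\sup_{r\in\mathcal{U}}X(r)$, with one-step decomposition $\rho=\rho_0\circ\cdots\circ\rho_{K-1}$, where $\rho_k(X,r)=\sup_{r'\in\mathcal{U}:r'_{1:k}=r_{1:k}}X(r')$ if some $r'\in\mathcal{U}$ has $r'_{1:k}=r_{1:k}$, and otherwise $\rho_k(X,r)=X([r_{1:k};0_{k+1:K}])$ (understood as $\inf_{\epsilon>0}\operatorname{ess\,sup}$ over $r'$ with $r'_{1:k}=r_{1:k}$, $\|r'_{k+1:K}\|_\infty\le\epsilon$). Let $\rho_{k,K}=\rho_k\circ\cdots\circ\rho_{K-1}$. Bounded market risk: $0\ge\inf_{\zeta}\rho(-\sum_{k=0}^{K-1}\zeta_kr_{k+1})>-\infty$ (for coherent $\rho$ equivalently $=0$). Bounded conditional market risk: for each $k\in\{0,\dots,K-1\}$, $0\ge\inf_{\zeta_k,\dots,\zeta_{K-1}}\rho_{k,K}(-\sum_{\ell=k}^{K-1}\zeta_\ell r_{\ell+1})>-\infty$ a.s. (equal to $0$ when the conditional mappings are scale invariant, as here). *)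

theory Defs
  imports "HOL-Analysis.Analysis"
begin

text \<open>Returns r = (r_1,...,r_K) are modelled as functions nat => real; the sample
space Omega = R^K is the set of such functions vanishing outside {1..K}.\<close>

definition Omega :: "nat \<Rightarrow> (nat \<Rightarrow> real) set" where
  "Omega K = {r. \<forall>i. i \<notin> {1..K} \<longrightarrow> r i = 0}"

definition trunc :: "nat \<Rightarrow> (nat \<Rightarrow> real) \<Rightarrow> (nat \<Rightarrow> real)" where
  "trunc k r = (\<lambda>i. if i \<in> {1..k} then r i else 0)"

text \<open>A strategy zeta = (zeta_0,...,zeta_{K-1}) is adapted: zeta_l is
sigma(r_1..r_l)-measurable, i.e. a Borel function of the first l returns.\<close>
definition adapted :: "nat \<Rightarrow> (nat \<Rightarrow> (nat \<Rightarrow> real) \<Rightarrow> real) \<Rightarrow> bool" where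
  "adapted K \<zeta> \<longleftrightarrow>
     (\<forall>l<K. \<exists>g \<in> borel_measurable (borel :: (nat \<Rightarrow> real) measure).
        \<forall>r. \<zeta> l r = g (trunc l r))"

definition gains :: "(nat \<Rightarrow> (nat \<Rightarrow> real) \<Rightarrow> real) \<Rightarrow> nat \<Rightarrow> nat \<Rightarrow> (nat \<Rightarrow> real) \<Rightarrow> real" where
  "gains \<zeta> k K r = (\<Sum>l\<in>{k..<K}. \<zeta> l r * r (Suc l))"

definition rho_wc :: "(nat \<Rightarrow> real) set \<Rightarrow> ((nat \<Rightarrow> real) \<Rightarrow> ereal) \<Rightarrow> ereal" where
  "rho_wc U X = (SUP r\<in>U. X r)"

definition rho_step :: "(nat \<Rightarrow> real) set \<Rightarrow> nat \<Rightarrow> ((nat \<Rightarrow> real) \<Rightarrow> ereal) \<Rightarrow> (nat \<Rightarrow> real) \<Rightarrow> ereal" where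
  "rho_step U k X r =
     (if \<exists>r'\<in>U. \<forall>i\<in>{1..k}. r' i = r i
      then (SUP r'\<in>{r'\<in>U. \<forall>i\<in>{1..k}. r' i = r i}. X r')
      else X (trunc k r))"

definition rho_comp :: "(nat \<Rightarrow> real) set \<Rightarrow> nat \<Rightarrow> nat \<Rightarrow> ((nat \<Rightarrow> real) \<Rightarrow> ereal) \<Rightarrow> (nat \<Rightarrow> real) \<Rightarrow> ereal" where
  "rho_comp U k K X = foldr (\<lambda>j Y. rho_step U j Y) [k..<K] X"

definition bounded_market_risk :: "(nat \<Rightarrow> real) set \<Rightarrow> nat \<Rightarrow> bool" where
  "bounded_market_risk U K \<longleftrightarrow>
     (let I = (INF \<zeta>\<in>{\<zeta>. adapted K \<zeta>}. rho_wc U (\<lambda>r. ereal (- gains \<zeta> 0 K r)))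
      in I \<le> 0 \<and> - \<infinity> < I)"

definition bounded_cond_market_risk :: "(nat \<Rightarrow> real) set \<Rightarrow> nat \<Rightarrow> bool" where
  "bounded_cond_market_risk U K \<longleftrightarrow>
     (\<forall>k<K. \<forall>r\<in>Omega K.
        (let I = (INF \<zeta>\<in>{\<zeta>. adapted K \<zeta>}. rho_comp U k K (\<lambda>r'. ereal (- gains \<zeta> k K r')) r)
         in I \<le> 0 \<and> - \<infinity> < I))"

definition logsum :: "(nat \<Rightarrow> real) \<Rightarrow> nat \<Rightarrow> real" where
  "logsum r k = (\<Sum>l=1..k. ln (1 + r l))"

definition U1 :: "real \<Rightarrow> real \<Rightarrow> real \<Rightarrow> nat \<Rightarrow> real \<Rightarrow> (nat \<Rightarrow> real) set" where
  "U1 \<mu> \<sigma> T K \<Gamma> = {r \<in> Omega K. (\<forall>l\<in>{1..K}. 1 + r l > 0) \<and>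
     (\<forall>k\<in>{1..K}. \<bar>(logsum r k - \<mu> * real k * T / real K) / (\<sigma> * sqrt (real k * T / real K))\<bar> \<le> \<Gamma>)}"

text \<open>max over k' in {k+1..K} of |...| - Gamma <= 0 (vacuous for k = K),
written out as a bound for every k'.\<close>
definition W :: "real \<Rightarrow> real \<Rightarrow> real \<Rightarrow> nat \<Rightarrow> real \<Rightarrow> (nat \<Rightarrow> real) set" where
  "W \<mu> \<sigma> T K \<Gamma> = {r \<in> Omega K. (\<forall>l\<in>{1..K}. 1 + r l > 0) \<and>
     (\<forall>k\<in>{1..K}. \<forall>k'\<in>{k+1..K}.
        \<bar>(logsum r k - \<mu> * real k' * T / real K) / (\<sigma> * sqrt (real k' * T / real K))\<bar> - \<Gamma> \<le> 0)}"

end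

theory Submission
  imports Defs
begin

text \<open>The zero strategy gains nothing, so both infima are at most 0. On the other hand, if the
uncertainty set is closed under truncation, the adversary may answer every strategy with the
scenario in which all remaining returns vanish; the gains are then 0, so every strategy has
nonnegative (conditional) worst-case risk. The set \<open>U1 \<inter> W\<close> is closed under truncation: freezing
the log-price after stage \<open>j\<close> keeps the later standardized deviations within \<open>\<Gamma>\<close> precisely
because of the constraints defining \<open>W\<close> (and, for \<open>j = 0\<close>, because of the bound on the
drift).\<close>

definition trunc_closed :: "(nat \<Rightarrow> real) set \<Rightarrow> bool" where
  "trunc_closed U \<longleftrightarrow> (\<forall>r\<in>U. \<forall>j. trunc j r \<in> U)"

lemma trunc_zero: "trunc 0 r = (\<lambda>_. 0)"
  by (simp add: trunc_def)

lemma trunc_eq_iff_agree: "trunc j r' = trunc j r \<longleftrightarrow> (\<forall>i\<in>{1..j}. r' i = r i)"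
  by (auto simp: trunc_def fun_eq_iff)

lemma gains_eq_zero_if_stopped: "\<forall>i\<in>{k<..K}. r i = 0 \<Longrightarrow> gains \<zeta> k K r = 0"
  by (simp add: gains_def)

lemma gains_zero_strategy: "gains (\<lambda>l r. 0) k K r = 0"
  by (simp add: gains_def)

lemma adapted_zero_strategy: "adapted K (\<lambda>l r. 0)"
  unfolding adapted_def by (auto intro!: bexI[of _ "\<lambda>_. 0"])

lemma rho_comp_self: "rho_comp U K K X = X"
  by (simp add: rho_comp_def)

lemma rho_comp_unfold: "j < K \<Longrightarrow> rho_comp U j K X = rho_step U j (rho_comp U (Suc j) K X)"
  by (simp add: rho_comp_def upt_conv_Cons)

lemma rho_step_const: "rho_step U j (\<lambda>_. c) = (\<lambda>_. c)"
proof
  fix r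
  show "rho_step U j (\<lambda>_. c) r = c"
    by (cases "\<exists>r'\<in>U. \<forall>i\<in>{1..j}. r' i = r i") (auto simp: rho_step_def SUP_constant)
qed

lemma rho_comp_const: "rho_comp U k K (\<lambda>_. c) = (\<lambda>_. c)"
proof -
  have "foldr (\<lambda>j Y. rho_step U j Y) js (\<lambda>_. c) = (\<lambda>_. c)" for js
    by (induction js) (simp_all add: rho_step_const)
  then show ?thesis
    by (simp add: rho_comp_def)
qed

lemma rho_step_ge_trunc:
  assumes "trunc_closed U"
  shows "X (trunc j r) \<le> rho_step U j X r"
proof (cases "\<exists>r'\<in>U. \<forall>i\<in>{1..j}. r' i = r i")
  case True
  then obtain r' where "r' \<in> U" and "trunc j r' = trunc j r"
    using trunc_eq_iff_agree by blast
  then have "trunc j r \<in> U"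
    using assms unfolding trunc_closed_def by metis
  then have "trunc j r \<in> {r'\<in>U. \<forall>i\<in>{1..j}. r' i = r i}"
    by (simp add: trunc_def)
  then show ?thesis
    using True by (simp add: rho_step_def SUP_upper)
next
  case False
  then have "rho_step U j X r = X (trunc j r)"
    unfolding rho_step_def by (rule if_not_P)
  then show ?thesis
    by simp
qed

lemma rho_comp_ge_if_ge_on_stopped_paths:
  fixes c :: ereal
  assumes "trunc_closed U" and "k \<le> j" and "j \<le> K"
    and stopped: "\<And>r'. \<forall>i\<in>{k<..K}. r' i = 0 \<Longrightarrow> c \<le> X r'"
    and "\<forall>i\<in>{k<..j}. r i = 0"
  shows "c \<le> rho_comp U j K X r"
  using assms(3,2,5)
proof (induction j arbitrary: r rule: inc_induct)
  case base
  then show ?case by (simp add: rho_comp_self stopped)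
next
  case (step j)
  have "\<forall>i\<in>{k<..Suc j}. trunc j r i = 0"
    using step.prems(2) by (auto simp: trunc_def)
  then have "c \<le> rho_comp U (Suc j) K X (trunc j r)"
    using step.IH step.prems(1) by simp
  also have "\<dots> \<le> rho_step U j (rho_comp U (Suc j) K X) r"
    by (rule rho_step_ge_trunc[OF assms(1)])
  finally show ?case
    using step.hyps by (simp add: rho_comp_unfold)
qed

lemma INF_adapted_eq_zero:
  fixes F :: "(nat \<Rightarrow> (nat \<Rightarrow> real) \<Rightarrow> real) \<Rightarrow> ereal"
  assumes "F (\<lambda>l r. 0) \<le> 0" and "\<And>\<zeta>. adapted K \<zeta> \<Longrightarrow> 0 \<le> F \<zeta>"
  shows "(INF \<zeta>\<in>{\<zeta>. adapted K \<zeta>}. F \<zeta>) = 0"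
proof (rule order.antisym)
  show "(INF \<zeta>\<in>{\<zeta>. adapted K \<zeta>}. F \<zeta>) \<le> 0"
    using assms(1) adapted_zero_strategy by (blast intro: INF_lower2)
qed (use assms(2) in \<open>auto intro: INF_greatest\<close>)

lemma bounded_market_risk_if_trunc_closed:
  assumes "trunc_closed U" and "U \<noteq> {}"
  shows "bounded_market_risk U K"
proof -
  obtain r where "r \<in> U"
    using assms(2) by blast
  then have zero_in_U: "(\<lambda>_. 0) \<in> U"
    using assms(1) trunc_zero[of r] unfolding trunc_closed_def by metis
  have "0 \<le> rho_wc U (\<lambda>r. ereal (- gains \<zeta> 0 K r))" for \<zeta>
    using SUP_upper[OF zero_in_U, of "\<lambda>r. ereal (- gains \<zeta> 0 K r)"]
    by (simp add: rho_wc_def gains_def zero_ereal_def)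
  then have "(INF \<zeta>\<in>{\<zeta>. adapted K \<zeta>}. rho_wc U (\<lambda>r. ereal (- gains \<zeta> 0 K r))) = 0"
    by (intro INF_adapted_eq_zero) (simp_all add: rho_wc_def gains_zero_strategy SUP_le_iff)
  then show ?thesis
    by (simp add: bounded_market_risk_def)
qed

lemma bounded_cond_market_risk_if_trunc_closed:
  assumes "trunc_closed U"
  shows "bounded_cond_market_risk U K"
proof -
  have "(INF \<zeta>\<in>{\<zeta>. adapted K \<zeta>}. rho_comp U k K (\<lambda>r'. ereal (- gains \<zeta> k K r')) r) = 0"
    if "k < K" for k r
  proof (rule INF_adapted_eq_zero)
    show "rho_comp U k K (\<lambda>r'. ereal (- gains (\<lambda>l r. 0) k K r')) r \<le> 0"
      by (simp add: gains_zero_strategy rho_comp_const)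
    show "0 \<le> rho_comp U k K (\<lambda>r'. ereal (- gains \<zeta> k K r')) r" for \<zeta>
      using that by (intro rho_comp_ge_if_ge_on_stopped_paths[OF assms, where k = k])
        (simp_all add: gains_eq_zero_if_stopped)
  qed
  then show ?thesis
    by (simp add: bounded_cond_market_risk_def)
qed

definition zscore :: "real \<Rightarrow> real \<Rightarrow> real \<Rightarrow> nat \<Rightarrow> real \<Rightarrow> nat \<Rightarrow> real" where
  "zscore \<mu> \<sigma> T K s k = (s - \<mu> * real k * T / real K) / (\<sigma> * sqrt (real k * T / real K))"

lemma zscore_zero:
  assumes "0 \<le> T"
  shows "zscore \<mu> \<sigma> T K 0 k = - (\<mu> * sqrt (real k * T / real K) / \<sigma>)"
proof -
  define x where "x = real k * T / real K"
  have "0 \<le> x"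
    using assms by (simp add: x_def)
  then have "(0 - \<mu> * x) / (\<sigma> * sqrt x) = - (\<mu> * sqrt x / \<sigma>)"
    using real_div_sqrt[of x] by (metis diff_0 divide_divide_eq_right minus_divide_left)
  then show ?thesis
    by (simp add: zscore_def x_def)
qed

lemma logsum_trunc: "logsum (trunc j r) k = logsum r (min j k)"
proof -
  have "logsum (trunc j r) k = (\<Sum>l=1..k. if l \<le> j then ln (1 + r l) else 0)"
    unfolding logsum_def trunc_def by (intro sum.cong) auto
  also have "\<dots> = (\<Sum>l\<in>{1..k} \<inter> {l. l \<le> j}. ln (1 + r l))"
    by (simp add: sum.inter_restrict)
  also have "{1..k} \<inter> {l. l \<le> j} = {1..min j k}"
    by auto
  finally show ?thesis
    by (simp add: logsum_def)
qed

lemma mem_U1_Int_W_iff: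
  assumes drift: "\<forall>k\<in>{1..K}. \<bar>zscore \<mu> \<sigma> T K 0 k\<bar> \<le> \<Gamma>"
  shows "r \<in> U1 \<mu> \<sigma> T K \<Gamma> \<inter> W \<mu> \<sigma> T K \<Gamma> \<longleftrightarrow>
    r \<in> Omega K \<and> (\<forall>l\<in>{1..K}. 0 < 1 + r l) \<and>
    (\<forall>k k'. k \<le> k' \<longrightarrow> k' \<in> {1..K} \<longrightarrow> \<bar>zscore \<mu> \<sigma> T K (logsum r k) k'\<bar> \<le> \<Gamma>)"
    (is "_ \<longleftrightarrow> _ \<and> _ \<and> ?bands")
proof -
  have "?bands \<longleftrightarrow>
      (\<forall>k\<in>{1..K}. \<bar>zscore \<mu> \<sigma> T K (logsum r k) k\<bar> \<le> \<Gamma>) \<and>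
      (\<forall>k\<in>{1..K}. \<forall>k'\<in>{k+1..K}. \<bar>zscore \<mu> \<sigma> T K (logsum r k) k'\<bar> \<le> \<Gamma>)"
  proof (intro iffI conjI allI impI)
    fix k k' :: nat
    assume "k \<le> k'" "k' \<in> {1..K}"
      and "(\<forall>k\<in>{1..K}. \<bar>zscore \<mu> \<sigma> T K (logsum r k) k\<bar> \<le> \<Gamma>) \<and>
        (\<forall>k\<in>{1..K}. \<forall>k'\<in>{k+1..K}. \<bar>zscore \<mu> \<sigma> T K (logsum r k) k'\<bar> \<le> \<Gamma>)"
    then show "\<bar>zscore \<mu> \<sigma> T K (logsum r k) k'\<bar> \<le> \<Gamma>"
      using drift by (cases "k = 0"; cases "k = k'") (auto simp: logsum_def)
  qed auto
  then show ?thesis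
    by (auto simp: U1_def W_def zscore_def)
qed

lemma trunc_closed_U1_Int_W:
  assumes "\<forall>k\<in>{1..K}. \<bar>zscore \<mu> \<sigma> T K 0 k\<bar> \<le> \<Gamma>"
  shows "trunc_closed (U1 \<mu> \<sigma> T K \<Gamma> \<inter> W \<mu> \<sigma> T K \<Gamma>)"
proof -
  have "trunc j r \<in> U1 \<mu> \<sigma> T K \<Gamma> \<inter> W \<mu> \<sigma> T K \<Gamma>"
    if "r \<in> U1 \<mu> \<sigma> T K \<Gamma> \<inter> W \<mu> \<sigma> T K \<Gamma>" for r j
    using that unfolding mem_U1_Int_W_iff[OF assms]
    by (simp add: logsum_trunc) (auto simp: Omega_def trunc_def)
  then show ?thesis
    unfolding trunc_closed_def by blast
qed

lemma zero_mem_U1_Int_W: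
  assumes "\<forall>k\<in>{1..K}. \<bar>zscore \<mu> \<sigma> T K 0 k\<bar> \<le> \<Gamma>"
  shows "(\<lambda>_. 0) \<in> U1 \<mu> \<sigma> T K \<Gamma> \<inter> W \<mu> \<sigma> T K \<Gamma>"
  unfolding mem_U1_Int_W_iff[OF assms] using assms by (simp add: Omega_def logsum_def)

theorem lemma5:
  fixes \<mu> \<sigma> T \<Gamma> :: real and K :: nat
  assumes "\<mu> > 0" and "\<sigma> > 0" and "T > 0" and "\<Gamma> > 0"
    and "\<forall>k\<in>{1..K}. \<mu> * sqrt (real k * T / real K) / \<sigma> \<le> \<Gamma>"
  shows "bounded_market_risk (U1 \<mu> \<sigma> T K \<Gamma> \<inter> W \<mu> \<sigma> T K \<Gamma>) K
       \<and> bounded_cond_market_risk (U1 \<mu> \<sigma> T K \<Gamma> \<inter> W \<mu> \<sigma> T K \<Gamma>) K"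
proof -
  have drift: "\<forall>k\<in>{1..K}. \<bar>zscore \<mu> \<sigma> T K 0 k\<bar> \<le> \<Gamma>"
    using assms by (simp add: zscore_zero)
  show ?thesis
    using trunc_closed_U1_Int_W[OF drift] zero_mem_U1_Int_W[OF drift]
    by (blast intro: bounded_market_risk_if_trunc_closed bounded_cond_market_risk_if_trunc_closed)
qed

end
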